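(* Let $(X,d)$ be a metric space, $K\subseteq X$ compact and let $\varepsilon>0$. Then \[ M_{\omega}(K,\varepsilon)\le M^{*}(K,\varepsilon)\le N^{*}(K,\varepsilon)\le N_{\omega}(K,\varepsilon). \]
   Context: $X$ carries the metric topology; $B(x,\varepsilon)=\{y\in X:d(x,y)\le\varepsilon\}$ and $\mathbbm{1}_A$ is the indicator of $A$. $\mathcal{D}_+(X)$ denotes the non-negative finite discrete measures on $X$ (finite sums $\sum_i\omega_i\delta_{x_i}$, $\omega_i\ge0$) and $\mathcal{B}_+(X)$ the non-negative Borel measures on $X$. Define $N_\omega(K,\varepsilon)=\inf\{\nu(X):\nu\in\mathcal{D}_+(X),\ \int\mathbbm{1}_{B(y,\varepsilon)}(x)\,d\nu(y)\ge\mathbbm{1}_K(x)\ \forall x\in X\}$; $N^{*}(K,\varepsilon)$ the same infimum over $\mu\in\mathcal{B}_+(X)$; $M_\omega(K,\varepsilon)=\sup\{\rho(K):\rho\in\mathcal{D}_+(X),\ \int\mathbbm{1}_{B(y,\varepsilon)}(x)\,d\rho(y)\le1\ \forall x\in X\}$; $M^{*}(K,\varepsilon)$ the same supremum over $\rho\in\mathcal{B}_+(X)$. *)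

theory Defs
  imports "HOL-Analysis.Analysis"
begin

text \<open>The metric space X is the type 'a (X = UNIV).
 A non-negative finite discrete measure sum_i w_i delta_{x_i} is represented by a
 finite set S of atoms together with non-negative weights w.\<close>

definition disc_cover :: "'a::metric_space set \<Rightarrow> real \<Rightarrow> 'a set \<Rightarrow> ('a \<Rightarrow> real) \<Rightarrow> bool" where
  "disc_cover K e S w \<longleftrightarrow> finite S \<and> (\<forall>y\<in>S. w y \<ge> 0) \<and>
     (\<forall>x. (\<Sum>y\<in>S. w y * indicator (cball y e) x) \<ge> indicator K x)"

definition disc_pack :: "'a::metric_space set \<Rightarrow> real \<Rightarrow> 'a set \<Rightarrow> ('a \<Rightarrow> real) \<Rightarrow> bool" where
  "disc_pack K e S w \<longleftrightarrow> finite S \<and> (\<forall>y\<in>S. w y \<ge> 0) \<and>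
     (\<forall>x. (\<Sum>y\<in>S. w y * indicator (cball y e) x) \<le> (1::real))"

definition N_omega :: "'a::metric_space set \<Rightarrow> real \<Rightarrow> ennreal" where
  "N_omega K e = Inf {ennreal (\<Sum>y\<in>S. w y) | S w. disc_cover K e S w}"

definition M_omega :: "'a::metric_space set \<Rightarrow> real \<Rightarrow> ennreal" where
  "M_omega K e = Sup {ennreal (\<Sum>y\<in>S\<inter>K. w y) | S w. disc_pack K e S w}"

definition N_star :: "'a::metric_space set \<Rightarrow> real \<Rightarrow> ennreal" where
  "N_star K e = Inf {emeasure \<mu> UNIV | \<mu>. sets \<mu> = sets borel \<and>
     (\<forall>x. (\<integral>\<^sup>+ y. indicator (cball y e) x \<partial>\<mu>) \<ge> indicator K x)}"

definition M_star :: "'a::metric_space set \<Rightarrow> real \<Rightarrow> ennreal" where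
  "M_star K e = Sup {emeasure \<rho> K | \<rho>. sets \<rho> = sets borel \<and>
     (\<forall>x. (\<integral>\<^sup>+ y. indicator (cball y e) x \<partial>\<rho>) \<le> 1)}"

end

theory Submission imports Defs begin

text \<open>Since \<open>\<integral> \<one>\<^bsub>B(y,\<epsilon>)\<^esub>(x) d\<nu>(y) = \<nu>(B(x,\<epsilon>))\<close>, the constraints say that every
  \<open>\<epsilon>\<close>-ball has \<open>\<rho>\<close>-mass at most 1, respectively that every ball centred in \<open>K\<close> has
  \<open>\<mu>\<close>-mass at least 1. The outer inequalities hold because a discrete measure is a Borel
  measure. For the middle one, integrate the indicator of \<open>{(x,y). x \<in> K, d(x,y) \<le> \<epsilon>}\<close>
  against \<open>\<rho>|\<^sub>K \<times> \<mu>\<close> in both orders (Tonelli): integrating out \<open>y\<close> first gives at least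
  \<open>\<rho>(K)\<close>, integrating out \<open>x\<close> first gives at most \<open>\<mu>(X)\<close>. Compactness of \<open>K\<close> makes
  \<open>\<rho>|\<^sub>K\<close> finite and the diagonal neighbourhood product-measurable.\<close>

lemma indicator_cball_commute: "indicator (cball y e) x = indicator (cball x e) y"
  by (simp add: indicator_def dist_commute)

lemma nn_integral_indicator_cball:
  assumes "sets M = sets borel"
  shows "(\<integral>\<^sup>+ y. indicator (cball y e) x \<partial>M) = emeasure M (cball x e)"
  using assms by (simp add: indicator_cball_commute[of _ e x])

definition discrete_measure :: "'a::topological_space set \<Rightarrow> ('a \<Rightarrow> real) \<Rightarrow> 'a measure" where
  "discrete_measure S w =
     measure_of UNIV (sets borel) (\<lambda>A. \<Sum>y\<in>S. ennreal (w y) * indicator A y)"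

lemma sets_discrete_measure [simp, measurable_cong]: "sets (discrete_measure S w) = sets borel"
  unfolding discrete_measure_def by (simp add: sets.sigma_sets_eq[of borel, simplified])

lemma emeasure_discrete_measure:
  assumes "A \<in> sets borel" and "\<forall>y\<in>S. w y \<ge> 0"
  shows "emeasure (discrete_measure S w) A = ennreal (\<Sum>y\<in>S. w y * indicator A y)"
proof -
  have "emeasure (discrete_measure S w) A = (\<Sum>y\<in>S. ennreal (w y) * indicator A y)"
  proof (rule emeasure_measure_of[OF discrete_measure_def])
    show "countably_additive (sets (discrete_measure S w)) (\<lambda>A. \<Sum>y\<in>S. ennreal (w y) * indicator A y)"
    proof (rule countably_additiveI)
      fix A :: "nat \<Rightarrow> 'a set"
      assume "disjoint_family A"
      then show "(\<Sum>i. \<Sum>y\<in>S. ennreal (w y) * indicator (A i) y) =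
                 (\<Sum>y\<in>S. ennreal (w y) * indicator (\<Union>i. A i) y)"
        by (subst suminf_sum) (auto simp: suminf_indicator)
    qed
  qed (use assms in \<open>auto simp: positive_def\<close>)
  also have "\<dots> = ennreal (\<Sum>y\<in>S. w y * indicator A y)"
    using assms(2) by (simp add: sum_ennreal[symmetric] ennreal_mult' flip: ennreal_indicator)
  finally show ?thesis .
qed

lemma nn_integral_indicator_cball_discrete_measure:
  assumes "\<forall>y\<in>S. w y \<ge> 0"
  shows "(\<integral>\<^sup>+ y. indicator (cball y e) x \<partial>discrete_measure S w) =
         ennreal (\<Sum>y\<in>S. w y * indicator (cball y e) x)"
  using assms
  by (simp add: nn_integral_indicator_cball emeasure_discrete_measure indicator_cball_commute[of _ e x])

lemma M_omega_le_M_star: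
  fixes K :: "'a::metric_space set"
  assumes "K \<in> sets borel"
  shows "M_omega K e \<le> M_star K e"
  unfolding M_omega_def M_star_def
proof (rule Sup_mono, safe)
  fix S w assume "disc_pack K e S w"
  then have S: "finite S" "\<forall>y\<in>S. w y \<ge> 0"
    and pack: "\<And>x. (\<Sum>y\<in>S. w y * indicator (cball y e) x) \<le> 1"
    unfolding disc_pack_def by auto
  let ?\<rho> = "discrete_measure S w"
  have "emeasure ?\<rho> K = ennreal (\<Sum>y\<in>S\<inter>K. w y)"
    using assms S by (simp add: emeasure_discrete_measure sum.inter_restrict indicator_def
        if_distrib cong: if_cong)
  moreover have "(\<integral>\<^sup>+ y. indicator (cball y e) x \<partial>?\<rho>) \<le> 1" for x
    using pack[of x] S(2) by (simp add: nn_integral_indicator_cball_discrete_measure)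
  ultimately show "\<exists>b\<in>{emeasure \<rho> K | \<rho>. sets \<rho> = sets borel \<and>
      (\<forall>x. (\<integral>\<^sup>+ y. indicator (cball y e) x \<partial>\<rho>) \<le> 1)}. ennreal (\<Sum>y\<in>S\<inter>K. w y) \<le> b"
    by (intro bexI[of _ "emeasure ?\<rho> K"]) (auto intro!: exI[of _ ?\<rho>])
qed

lemma N_star_le_N_omega:
  fixes K :: "'a::metric_space set"
  shows "N_star K e \<le> N_omega K e"
  unfolding N_omega_def N_star_def
proof (rule Inf_mono, safe)
  fix S w assume "disc_cover K e S w"
  then have S: "finite S" "\<forall>y\<in>S. w y \<ge> 0"
    and cover: "\<And>x. indicator K x \<le> (\<Sum>y\<in>S. w y * indicator (cball y e) x)"
    unfolding disc_cover_def by auto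
  let ?\<mu> = "discrete_measure S w"
  have "emeasure ?\<mu> UNIV = ennreal (\<Sum>y\<in>S. w y)"
    using S by (simp add: emeasure_discrete_measure)
  moreover have "indicator K x \<le> (\<integral>\<^sup>+ y. indicator (cball y e) x \<partial>?\<mu>)" for x
    using cover[of x] S(2)
    by (simp add: nn_integral_indicator_cball_discrete_measure) (metis ennreal_indicator ennreal_leI)
  ultimately show "\<exists>b\<in>{emeasure \<mu> UNIV | \<mu>. sets \<mu> = sets borel \<and>
      (\<forall>x. indicator K x \<le> (\<integral>\<^sup>+ y. indicator (cball y e) x \<partial>\<mu>))}. b \<le> ennreal (\<Sum>y\<in>S. w y)"
    by (intro bexI[of _ "emeasure ?\<mu> UNIV"]) (auto intro!: exI[of _ ?\<mu>])
qed

lemma emeasure_compact_lt_top: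
  fixes K :: "'a::metric_space set"
  assumes "compact K" and "e > 0" and sets_\<rho>: "sets \<rho> = sets borel"
    and cball_finite: "\<And>x. emeasure \<rho> (cball x e) < \<infinity>"
  shows "emeasure \<rho> K < \<infinity>"
proof -
  obtain F where F: "finite F" "K \<subseteq> (\<Union>q\<in>F. ball q e)"
    using seq_compact_imp_totally_bounded[OF compact_imp_seq_compact[OF \<open>compact K\<close>]] \<open>e > 0\<close>
    by blast
  have cball_sets: "cball q e \<in> sets \<rho>" for q
    using sets_\<rho> by simp
  have "K \<subseteq> (\<Union>q\<in>F. cball q e)"
    using F(2) ball_subset_cball by blast
  then have "emeasure \<rho> K \<le> emeasure \<rho> (\<Union>q\<in>F. cball q e)"
    using F(1) cball_sets by (intro emeasure_mono sets.finite_UN)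
  also have "\<dots> \<le> (\<Sum>q\<in>F. emeasure \<rho> (cball q e))"
    using F(1) cball_sets by (intro emeasure_subadditive_finite) auto
  also have "\<dots> < \<infinity>"
    using F(1) cball_finite by (simp add: less_top)
  finally show ?thesis .
qed

lemma dist_le_of_approx_centres:
  fixes x y :: "'a::metric_space"
  assumes "\<And>n. \<exists>q. dist q x < inverse (Suc n) \<and> dist q y \<le> e + inverse (Suc n)"
  shows "dist x y \<le> e"
proof (rule field_le_epsilon)
  fix \<delta> :: real assume "\<delta> > 0"
  then obtain n where n: "inverse (Suc n) < \<delta> / 2"
    using reals_Archimedean[of "\<delta> / 2"] by auto
  obtain q where "dist q x < inverse (Suc n)" "dist q y \<le> e + inverse (Suc n)"
    using assms by blast
  then show "dist x y \<le> e + \<delta>"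
    using dist_triangle3[of x y q] n by linarith
qed

text \<open>In a non-separable space \<open>borel \<Otimes>\<^sub>M borel\<close> may be strictly smaller than the Borel sets
  of the product, so measurability is derived from finite \<open>1/(n+1)\<close>-nets of \<open>K\<close>.\<close>

lemma compact_dist_le_pairs_measurable:
  fixes K :: "'a::metric_space set"
  assumes "compact K"
  shows "{(x, y). x \<in> K \<and> dist x y \<le> e} \<in> sets (borel \<Otimes>\<^sub>M borel)"
proof -
  define r :: "nat \<Rightarrow> real" where "r n = inverse (Suc n)" for n
  have "r n > 0" for n
    by (simp add: r_def)
  then have "\<forall>n. \<exists>F. finite F \<and> K \<subseteq> (\<Union>q\<in>F. ball q (r n))"
    using seq_compact_imp_totally_bounded[OF compact_imp_seq_compact[OF assms]] by meson
  then obtain F where F: "\<And>n. finite (F n)" "\<And>n. K \<subseteq> (\<Union>q\<in>F n. ball q (r n))"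
    by metis
  define A where "A n = (\<Union>q\<in>F n. ball q (r n) \<times> cball q (e + r n))" for n
  have "{(x, y). x \<in> K \<and> dist x y \<le> e} = (K \<times> UNIV) \<inter> (\<Inter>n. A n)"
  proof (intro equalityI subsetI, clarsimp)
    fix x y n assume "x \<in> K" "dist x y \<le> e"
    then obtain q where "q \<in> F n" "dist q x < r n"
      using F(2)[of n] by auto
    moreover have "dist q y \<le> e + r n"
      using \<open>dist q x < r n\<close> \<open>dist x y \<le> e\<close> dist_triangle[of q y x] by linarith
    ultimately show "(x, y) \<in> A n"
      unfolding A_def by auto
  next
    fix p assume "p \<in> (K \<times> UNIV) \<inter> (\<Inter>n. A n)"
    then obtain x y where "p = (x, y)" "x \<in> K" "\<And>n. (x, y) \<in> A n"
      by auto
    moreover have "dist x y \<le> e"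
      using \<open>\<And>n. (x, y) \<in> A n\<close>
      by (intro dist_le_of_approx_centres) (auto simp: A_def r_def)
    ultimately show "p \<in> {(x, y). x \<in> K \<and> dist x y \<le> e}"
      by simp
  qed
  moreover have "A n \<in> sets (borel \<Otimes>\<^sub>M borel)" for n
    unfolding A_def using F(1) by (intro sets.finite_UN) auto
  then have "(\<Inter>n. A n) \<in> sets (borel \<Otimes>\<^sub>M borel)"
    by (intro sets.countable_INT) auto
  moreover have "K \<times> UNIV \<in> sets (borel \<Otimes>\<^sub>M (borel :: 'a measure))"
    using assms by (intro pair_measureI) (auto intro: borel_closed compact_imp_closed)
  ultimately show ?thesis
    by auto
qed

lemma emeasure_le_of_cball_packing_covering:
  fixes K :: "'a::metric_space set"
  assumes "compact K" and "e > 0"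
    and sets_\<rho>: "sets \<rho> = sets borel" and packing: "\<And>x. emeasure \<rho> (cball x e) \<le> 1"
    and sets_\<mu>: "sets \<mu> = sets borel" and covering: "\<And>x. x \<in> K \<Longrightarrow> 1 \<le> emeasure \<mu> (cball x e)"
  shows "emeasure \<rho> K \<le> emeasure \<mu> UNIV"
proof (cases "emeasure \<mu> UNIV = \<infinity>")
  case False
  have K: "K \<in> sets borel"
    using \<open>compact K\<close> by (simp add: compact_imp_closed)
  define \<rho>K where "\<rho>K = density \<rho> (indicator K)"
  have sets_\<rho>K: "sets \<rho>K = sets borel"
    by (simp add: \<rho>K_def sets_\<rho>)
  have emeasure_\<rho>K: "emeasure \<rho>K A = emeasure \<rho> (K \<inter> A)" if "A \<in> sets borel" for A
    unfolding \<rho>K_def using K that sets_\<rho> by (intro emeasure_restricted) auto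
  have "emeasure \<rho> (cball x e) < \<infinity>" for x
    using packing[of x] by (simp add: order.strict_trans1)
  then have "emeasure \<rho> K < \<infinity>"
    by (rule emeasure_compact_lt_top[OF \<open>compact K\<close> \<open>e > 0\<close> sets_\<rho>])
  then have "finite_measure \<rho>K"
    using emeasure_\<rho>K[of UNIV] sets_eq_imp_space_eq[OF sets_\<rho>K] by (intro finite_measureI) simp
  moreover have "finite_measure \<mu>"
    using False sets_eq_imp_space_eq[OF sets_\<mu>] by (intro finite_measureI) simp
  ultimately interpret pair_sigma_finite \<rho>K \<mu>
    by (simp add: pair_sigma_finite_def finite_measure.axioms(1))
  define S where "S = {(x, y). x \<in> K \<and> dist x y \<le> e}"
  have "S \<in> sets (\<rho>K \<Otimes>\<^sub>M \<mu>)"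
    unfolding S_def sets_pair_measure_cong[OF sets_\<rho>K sets_\<mu>]
    by (rule compact_dist_le_pairs_measurable[OF \<open>compact K\<close>])
  then have S_measurable: "(\<lambda>(x, y). indicator S (x, y) :: ennreal) \<in> borel_measurable (\<rho>K \<Otimes>\<^sub>M \<mu>)"
    by simp
  have "emeasure \<rho> K = (\<integral>\<^sup>+x. indicator K x \<partial>\<rho>K)"
    using emeasure_\<rho>K[OF K] K sets_\<rho>K by simp
  also have "\<dots> \<le> (\<integral>\<^sup>+x. (\<integral>\<^sup>+y. indicator S (x, y) \<partial>\<mu>) \<partial>\<rho>K)"
  proof (intro nn_integral_mono)
    fix x
    have "(\<integral>\<^sup>+y. indicator S (x, y) \<partial>\<mu>) = indicator K x * emeasure \<mu> (cball x e)"
      using sets_\<mu> by (simp add: S_def indicator_def of_bool_def dist_commute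
          flip: nn_integral_cmult_indicator)
    then show "indicator K x \<le> (\<integral>\<^sup>+y. indicator S (x, y) \<partial>\<mu>)"
      using covering[of x] by (simp add: indicator_def)
  qed
  also have "\<dots> = (\<integral>\<^sup>+y. (\<integral>\<^sup>+x. indicator S (x, y) \<partial>\<rho>K) \<partial>\<mu>)"
    using Fubini'[OF S_measurable] by simp
  also have "\<dots> \<le> (\<integral>\<^sup>+y. 1 \<partial>\<mu>)"
  proof (intro nn_integral_mono)
    fix y
    have "(\<integral>\<^sup>+x. indicator S (x, y) \<partial>\<rho>K) \<le> (\<integral>\<^sup>+x. indicator (cball y e) x \<partial>\<rho>K)"
      by (intro nn_integral_mono) (auto simp: S_def indicator_def dist_commute)
    also have "\<dots> = emeasure \<rho> (K \<inter> cball y e)"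
      using sets_\<rho>K by (simp add: emeasure_\<rho>K)
    also have "\<dots> \<le> emeasure \<rho> (cball y e)"
      using sets_\<rho> by (intro emeasure_mono) auto
    finally show "(\<integral>\<^sup>+x. indicator S (x, y) \<partial>\<rho>K) \<le> 1"
      using packing[of y] by simp
  qed
  also have "\<dots> = emeasure \<mu> UNIV"
    using sets_eq_imp_space_eq[OF sets_\<mu>] by simp
  finally show ?thesis .
qed simp

lemma M_star_le_N_star:
  fixes K :: "'a::metric_space set"
  assumes "compact K" and "e > 0"
  shows "M_star K e \<le> N_star K e"
  unfolding M_star_def N_star_def
proof (intro Sup_least Inf_greatest, safe)
  fix \<rho> \<mu> :: "'a measure"
  assume \<rho>: "sets \<rho> = sets borel" "\<forall>x. (\<integral>\<^sup>+ y. indicator (cball y e) x \<partial>\<rho>) \<le> 1"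
    and \<mu>: "sets \<mu> = sets borel" "\<forall>x. indicator K x \<le> (\<integral>\<^sup>+ y. indicator (cball y e) x \<partial>\<mu>)"
  show "emeasure \<rho> K \<le> emeasure \<mu> UNIV"
  proof (rule emeasure_le_of_cball_packing_covering[OF assms \<rho>(1) _ \<mu>(1)])
    show "emeasure \<rho> (cball x e) \<le> 1" for x
      using \<rho> by (simp add: nn_integral_indicator_cball)
    show "1 \<le> emeasure \<mu> (cball x e)" if "x \<in> K" for x
      using \<mu> that by (metis indicator_simps(1) nn_integral_indicator_cball)
  qed
qed

theorem theorem2p12:
  fixes K :: "'a::metric_space set" and e :: real
  assumes "compact K" and "e > 0"
  shows "M_omega K e \<le> M_star K e \<and> M_star K e \<le> N_star K e \<and> N_star K e \<le> N_omega K e"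
  using M_omega_le_M_star[OF borel_compact[OF assms(1)]] M_star_le_N_star[OF assms]
    N_star_le_N_omega by blast

end
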